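(* Let $\mathcal A_+,\mathcal A_-\subseteq\mathbb R^n$ be disjoint finite sets such that $(\mathcal A_+,\mathcal A_-)$ is an extended circuit and $\mathcal A_-\neq\varnothing$. Let $\Delta=\operatorname{conv}(\mathcal A_+)$ and, for $b\in\mathcal A_-$, let $\Gamma_{b,\Delta}$ be the unique face of $\Delta$ with $b\in\operatorname{relint}(\Gamma_{b,\Delta})$. If $f\in\mathcal S(\mathcal A_+,\mathcal A_-)$ satisfies $\operatorname{Sing}_{>0}(f)\neq\varnothing$, then $f=\sum_{b\in\mathcal A_-}q_b$ where each $q_b$ is a copositive circuit signomial with signed support $(\mathcal A_+\cap\Gamma_{b,\Delta},\{b\})$; in particular $f$ is SONC.
   Context: A signomial with signed support $(\mathcal B_+,\mathcal B_-)$ (disjoint finite subsets of $\mathbb R^n$) is $f(x)=\sum_{a\in\mathcal B_+}c_ax^a-\sum_{b\in\mathcal B_-}c_bx^b$ on $\mathbb R^n_{>0}$ with all $c_a,c_b>0$; $\mathcal S(\mathcal B_+,\mathcal B_-)$ is the set of these. With $\mathcal B=\mathcal B_+\cup\mathcal B_-$, $(\mathcal B_+,\mathcal B_-)$ is an extended circuit if either $\#\mathcal B=\#\mathcal B_+=1$ or $\operatorname{conv}(\mathcal B)$ is a simplex with vertex set $\mathcal B_+$; it is a circuit if either $\#\mathcal B=\#\mathcal B_+=1$ or it is an extended circuit with $\#\mathcal B_-=1$ and $\mathcal B_-\subseteq\operatorname{relint}(\operatorname{conv}(\mathcal B_+))$. A circuit signomial has circuit signed support. A signomial is SONC if it is a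 finite sum of circuit signomials that are copositive (nonnegative on $\mathbb R^n_{>0}$). $\operatorname{Sing}_{>0}(f)$ is the set of $x\in\mathbb R^n_{>0}$ with $f(x)=x_1\partial_{x_1}f(x)=\dots=x_n\partial_{x_n}f(x)=0$. *)

theory Defs
  imports "HOL-Analysis.Analysis"
begin

definition pos_orthant :: "(real^'n) set" where
  "pos_orthant = {x. \<forall>i. x $ i > 0}"

definition mono :: "real^'n \<Rightarrow> real^'n \<Rightarrow> real" where
  "mono x a = (\<Prod>i\<in>UNIV. (x $ i) powr (a $ i))"

definition signomials :: "(real^'n) set \<Rightarrow> (real^'n) set \<Rightarrow> (real^'n \<Rightarrow> real) set" where
  "signomials Bp Bm = {f. \<exists>c. (\<forall>a\<in>Bp \<union> Bm. c a > 0) \<and>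
      (\<forall>x\<in>pos_orthant. f x = (\<Sum>a\<in>Bp. c a * mono x a) - (\<Sum>b\<in>Bm. c b * mono x b))}"

definition extended_circuit :: "(real^'n) set \<Rightarrow> (real^'n) set \<Rightarrow> bool" where
  "extended_circuit Bp Bm \<longleftrightarrow>
     (card (Bp \<union> Bm) = 1 \<and> card Bp = 1) \<or>
     ((\<exists>k. k simplex (convex hull (Bp \<union> Bm))) \<and>
      {v. v extreme_point_of (convex hull (Bp \<union> Bm))} = Bp)"

definition circuit :: "(real^'n) set \<Rightarrow> (real^'n) set \<Rightarrow> bool" where
  "circuit Bp Bm \<longleftrightarrow>
     (card (Bp \<union> Bm) = 1 \<and> card Bp = 1) \<or>
     (extended_circuit Bp Bm \<and> card Bm = 1 \<and> Bm \<subseteq> rel_interior (convex hull Bp))"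

definition copositive :: "(real^'n \<Rightarrow> real) \<Rightarrow> bool" where
  "copositive f \<longleftrightarrow> (\<forall>x\<in>pos_orthant. f x \<ge> 0)"

definition circuit_signomial :: "(real^'n \<Rightarrow> real) \<Rightarrow> bool" where
  "circuit_signomial g \<longleftrightarrow> (\<exists>Bp Bm. finite Bp \<and> finite Bm \<and> Bp \<inter> Bm = {} \<and>
       circuit Bp Bm \<and> g \<in> signomials Bp Bm)"

definition SONC :: "(real^'n \<Rightarrow> real) \<Rightarrow> bool" where
  "SONC f \<longleftrightarrow> (\<exists>(I::nat set) g. finite I \<and>
      (\<forall>i\<in>I. circuit_signomial (g i) \<and> copositive (g i)) \<and>
      (\<forall>x\<in>pos_orthant. f x = (\<Sum>i\<in>I. g i x)))"

definition partial :: "(real^'n \<Rightarrow> real) \<Rightarrow> 'n \<Rightarrow> real^'n \<Rightarrow> real" where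
  "partial f i x = deriv (\<lambda>t. f (\<chi> j. if j = i then t else x $ j)) (x $ i)"

definition Sing_pos :: "(real^'n \<Rightarrow> real) \<Rightarrow> (real^'n) set" where
  "Sing_pos f = {x\<in>pos_orthant. f x = 0 \<and> (\<forall>i. x $ i * partial f i x = 0)}"

definition face_rel :: "(real^'n) \<Rightarrow> (real^'n) set \<Rightarrow> (real^'n) set" where
  "face_rel b \<Delta> = (THE F. F face_of \<Delta> \<and> b \<in> rel_interior F)"

end

theory Submission
  imports Defs
begin

(* Write m_a = c_a x0^a for a singular point x0. The equations f(x0) = 0 and x0_i df/dx_i(x0) = 0
   say that the masses m_a of the positive terms and those of the negative terms have the same
   total and the same barycentre. Splitting each negative mass m_b along the barycentric
   coordinates l_b of b with respect to the affinely independent set Ap therefore reproduces,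
   by uniqueness of barycentric coordinates, exactly the positive masses. Each piece
   q_b(x) = sum_a l_b(a) m_b (x/x0)^a - m_b (x/x0)^b is a circuit signomial supported on the face
   of b, and it is nonnegative by the weighted AM-GM inequality. *)

definition log_coords :: "real^'n \<Rightarrow> real^'n" where
  "log_coords x = (\<chi> i. ln (x $ i))"

lemma mono_eq_exp_inner:
  assumes "x \<in> pos_orthant"
  shows "mono x a = exp (a \<bullet> log_coords x)"
proof -
  have "mono x a = (\<Prod>i\<in>UNIV. exp (a $ i * ln (x $ i)))"
    unfolding mono_def using assms
    by (intro prod.cong refl) (simp add: pos_orthant_def powr_def; metis less_irrefl)
  then show ?thesis
    by (simp add: exp_sum inner_vec_def log_coords_def)
qed

lemma mono_pos: "x \<in> pos_orthant \<Longrightarrow> mono x a > 0"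
  by (simp add: mono_eq_exp_inner)

lemma mono_divide_mono:
  assumes "x \<in> pos_orthant" "y \<in> pos_orthant"
  shows "mono x a / mono y a = exp (a \<bullet> (log_coords x - log_coords y))"
  using assms by (simp add: mono_eq_exp_inner inner_diff_right exp_diff)

lemma has_real_derivative_mono_coordinate:
  assumes "x \<in> pos_orthant"
  shows "((\<lambda>t. mono (\<chi> j. if j = i then t else x $ j) a)
          has_real_derivative (a $ i / x $ i * mono x a)) (at (x $ i))"
proof -
  define K where "K = (\<Prod>j\<in>UNIV - {i}. x $ j powr a $ j)"
  have xi: "x $ i > 0" using assms by (auto simp: pos_orthant_def)
  have split: "mono (\<chi> j. if j = i then t else x $ j) a = t powr a $ i * K" for t
  proof -
    have "mono (\<chi> j. if j = i then t else x $ j) a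
        = (\<Prod>j\<in>UNIV. (if j = i then t else x $ j) powr a $ j)"
      by (simp add: mono_def)
    also have "\<dots> = (if i = i then t else x $ i) powr a $ i
        * (\<Prod>j\<in>UNIV - {i}. (if j = i then t else x $ j) powr a $ j)"
      by (rule prod.remove) auto
    also have "(\<Prod>j\<in>UNIV - {i}. (if j = i then t else x $ j) powr a $ j) = K"
      unfolding K_def by (intro prod.cong) auto
    finally show ?thesis by simp
  qed
  have "(\<chi> j. if j = i then x $ i else x $ j) = x"
    by (simp add: vec_eq_iff)
  then have "mono x a = x $ i powr a $ i * K"
    using split[of "x $ i"] by simp
  then have "a $ i * x $ i powr (a $ i - 1) * K = a $ i / x $ i * mono x a"
    using xi by (simp add: powr_diff)
  moreover have "((\<lambda>t. t powr a $ i * K)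
      has_real_derivative a $ i * x $ i powr (a $ i - 1) * K) (at (x $ i))"
    by (rule DERIV_cmult_right[OF has_real_derivative_powr[OF xi]])
  ultimately show ?thesis
    by (simp add: split)
qed

lemma scaled_partial_signomial:
  fixes f :: "real^'n \<Rightarrow> real"
  assumes "finite A" "finite B"
    and f: "\<forall>x\<in>pos_orthant. f x = (\<Sum>a\<in>A. c a * mono x a) - (\<Sum>b\<in>B. c b * mono x b)"
    and x: "x \<in> pos_orthant"
  shows "x $ i * partial f i x
       = (\<Sum>a\<in>A. c a * mono x a * a $ i) - (\<Sum>b\<in>B. c b * mono x b * b $ i)"
proof -
  have xi: "x $ i > 0" using x by (auto simp: pos_orthant_def)
  define p where "p t = (\<chi> j. if j = i then t else x $ j)" for t
  define D where "D = (\<Sum>a\<in>A. c a * (a $ i / x $ i * mono x a))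
                     - (\<Sum>b\<in>B. c b * (b $ i / x $ i * mono x b))"
  have "((\<lambda>t. (\<Sum>a\<in>A. c a * mono (p t) a) - (\<Sum>b\<in>B. c b * mono (p t) b))
          has_real_derivative D) (at (x $ i))"
    unfolding D_def p_def
    by (intro DERIV_diff DERIV_sum DERIV_cmult has_real_derivative_mono_coordinate x)
  moreover have "open {0::real<..}" "x $ i \<in> {0<..}" using xi by auto
  moreover have "(\<Sum>a\<in>A. c a * mono (p t) a) - (\<Sum>b\<in>B. c b * mono (p t) b) = f (p t)"
    if "t \<in> {0<..}" for t
  proof -
    have "p t \<in> pos_orthant" using that x by (auto simp: p_def pos_orthant_def)
    then show ?thesis using f by simp
  qed
  ultimately have "((\<lambda>t. f (p t)) has_real_derivative D) (at (x $ i))"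
    by (rule has_field_derivative_transform_within_open)
  then have "partial f i x = D"
    unfolding partial_def p_def by (rule DERIV_imp_deriv)
  moreover have "x $ i * D
      = (\<Sum>a\<in>A. c a * mono x a * a $ i) - (\<Sum>b\<in>B. c b * mono x b * b $ i)"
    using xi unfolding D_def by (simp add: right_diff_distrib sum_distrib_left field_simps)
  ultimately show ?thesis by simp
qed

lemma Sing_pos_signomial_balance:
  fixes f :: "real^'n \<Rightarrow> real"
  assumes "finite A" "finite B"
    and f: "\<forall>x\<in>pos_orthant. f x = (\<Sum>a\<in>A. c a * mono x a) - (\<Sum>b\<in>B. c b * mono x b)"
    and x: "x \<in> Sing_pos f"
  shows "(\<Sum>a\<in>A. c a * mono x a) = (\<Sum>b\<in>B. c b * mono x b)"
    and "(\<Sum>a\<in>A. (c a * mono x a) *\<^sub>R a) = (\<Sum>b\<in>B. (c b * mono x b) *\<^sub>R b)"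
proof -
  have xp: "x \<in> pos_orthant" and "f x = 0" and crit: "\<And>i. x $ i * partial f i x = 0"
    using x by (auto simp: Sing_pos_def)
  from \<open>f x = 0\<close> show "(\<Sum>a\<in>A. c a * mono x a) = (\<Sum>b\<in>B. c b * mono x b)"
    using f xp by simp
  show "(\<Sum>a\<in>A. (c a * mono x a) *\<^sub>R a) = (\<Sum>b\<in>B. (c b * mono x b) *\<^sub>R b)"
  proof (subst vec_eq_iff, intro allI)
    fix i
    have "(\<Sum>a\<in>A. c a * mono x a * a $ i) = (\<Sum>b\<in>B. c b * mono x b * b $ i)"
      using crit[of i] unfolding scaled_partial_signomial[OF assms(1,2) f xp] by simp
    then show "(\<Sum>a\<in>A. (c a * mono x a) *\<^sub>R a) $ i = (\<Sum>b\<in>B. (c b * mono x b) *\<^sub>R b) $ i"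
      by simp
  qed
qed

lemma extended_circuit_affine_independent:
  assumes "Ap \<inter> Am = {}" "Am \<noteq> {}" "extended_circuit Ap Am"
  shows "\<not> affine_dependent Ap" and "Am \<subseteq> convex hull Ap"
proof -
  have "\<not> (card (Ap \<union> Am) = 1 \<and> card Ap = 1)"
  proof
    assume "card (Ap \<union> Am) = 1 \<and> card Ap = 1"
    then obtain z w where "Ap \<union> Am = {z}" "Ap = {w}"
      by (meson card_1_singletonE)
    with assms(1,2) show False by auto
  qed
  with assms(3) obtain k where k: "k simplex (convex hull (Ap \<union> Am))"
    and ext: "{v. v extreme_point_of (convex hull (Ap \<union> Am))} = Ap"
    unfolding extended_circuit_def by blast
  from k obtain C where C: "\<not> affine_dependent C" "convex hull (Ap \<union> Am) = convex hull C"
    unfolding simplex_def by metis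
  with ext have "C = Ap"
    using extreme_point_of_convex_hull_affine_independent[OF C(1)] by auto
  with C show "\<not> affine_dependent Ap" "Am \<subseteq> convex hull Ap"
    using hull_subset[of "Ap \<union> Am" convex] by auto
qed

lemma affine_independent_coefficients_unique:
  fixes A :: "'a::euclidean_space set"
  assumes "\<not> affine_dependent A" "sum u A = sum v A"
    and "(\<Sum>a\<in>A. u a *\<^sub>R a) = (\<Sum>a\<in>A. v a *\<^sub>R a)" "a \<in> A"
  shows "u a = v a"
proof (rule ccontr)
  assume "u a \<noteq> v a"
  moreover have "sum (\<lambda>a. u a - v a) A = 0" "(\<Sum>a\<in>A. (u a - v a) *\<^sub>R a) = 0"
    using assms(2,3) by (simp_all add: sum_subtractf scaleR_left_diff_distrib)
  ultimately have "affine_dependent A"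
    using assms(1,4) aff_independent_finite
    by (subst affine_dependent_explicit_finite) (auto intro!: exI[of _ "\<lambda>a. u a - v a"])
  with assms(1) show False ..
qed

lemma sum_positive_support:
  fixes l :: "'a \<Rightarrow> real" and g :: "'a \<Rightarrow> 'b::real_vector"
  assumes "finite A" "\<forall>a\<in>A. 0 \<le> l a"
  shows "(\<Sum>a\<in>{a\<in>A. 0 < l a}. l a *\<^sub>R g a) = (\<Sum>a\<in>A. l a *\<^sub>R g a)"
proof (rule sum.mono_neutral_left)
  show "\<forall>a\<in>A - {a\<in>A. 0 < l a}. l a *\<^sub>R g a = 0"
  proof
    fix a assume "a \<in> A - {a\<in>A. 0 < l a}"
    with assms(2) have "0 \<le> l a" "\<not> 0 < l a" by auto
    then have "l a = 0" by linarith
    then show "l a *\<^sub>R g a = 0" by simp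
  qed
qed (simp_all add: assms(1))

lemma rel_interior_convex_hull_support:
  fixes l :: "'a::euclidean_space \<Rightarrow> real"
  assumes "\<not> affine_dependent A" "\<forall>a\<in>A. 0 \<le> l a" "sum l A = 1" "(\<Sum>a\<in>A. l a *\<^sub>R a) = b"
  shows "b \<in> rel_interior (convex hull {a\<in>A. 0 < l a})"
proof -
  let ?S = "{a\<in>A. 0 < l a}"
  have "finite A" using assms(1) aff_independent_finite by blast
  have "sum l ?S = 1"
    using sum_positive_support[OF \<open>finite A\<close> assms(2), of "\<lambda>_. 1::real"] assms(3) by simp
  moreover have "(\<Sum>a\<in>?S. l a *\<^sub>R a) = b"
    using sum_positive_support[OF \<open>finite A\<close> assms(2), of "\<lambda>a. a"] assms(4) by simp
  moreover have "\<not> affine_dependent ?S"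
    using assms(1) affine_independent_subset[of A ?S] by blast
  ultimately show ?thesis
    unfolding rel_interior_convex_hull_explicit[OF \<open>\<not> affine_dependent ?S\<close>]
    by (intro CollectI exI[of _ l] conjI) simp_all
qed

lemma face_rel_convex_hull_affine_independent:
  assumes "\<not> affine_dependent A" "S \<subseteq> A" "b \<in> rel_interior (convex hull S)"
  shows "face_rel b (convex hull A) = convex hull S"
  unfolding face_rel_def
proof (rule the_equality)
  have "convex hull S face_of convex hull A"
    using face_of_convex_hull_affine_independent[OF assms(1)] assms(2) by blast
  with assms(3) show "convex hull S face_of convex hull A \<and> b \<in> rel_interior (convex hull S)"
    by blast
  then show "F = convex hull S" if "F face_of convex hull A \<and> b \<in> rel_interior F" for F
    using that face_of_eq by blast
qed

lemma Int_convex_hull_affine_independent: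
  assumes "\<not> affine_dependent A" "S \<subseteq> A"
  shows "A \<inter> convex hull S = S"
proof
  show "S \<subseteq> A \<inter> convex hull S" using assms(2) hull_subset[of S convex] by blast
  show "A \<inter> convex hull S \<subseteq> S"
  proof
    fix a assume a: "a \<in> A \<inter> convex hull S"
    show "a \<in> S"
    proof (rule ccontr)
      assume "a \<notin> S"
      with assms(2) have "S \<subseteq> A - {a}" by blast
      then have "convex hull S \<subseteq> affine hull (A - {a})"
        by (meson convex_hull_subset_affine_hull hull_mono subset_trans)
      with a assms(1) show False unfolding affine_dependent_def by blast
    qed
  qed
qed

lemma circuit_if_rel_interior_convex_hull:
  assumes "\<not> affine_dependent S" "b \<in> rel_interior (convex hull S)"
  shows "circuit S {b}"
proof -
  have hull_eq: "convex hull (S \<union> {b}) = convex hull S"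
    using assms(2) rel_interior_subset
    by (metis Un_commute hull_insert hull_redundant insert_is_Un subsetD)
  have "\<exists>k. k simplex convex hull S"
    unfolding simplex_def using assms(1) by (intro exI[of _ "int (card S) - 1"] exI[of _ S]) simp
  moreover have "{v. v extreme_point_of convex hull S} = S"
    using extreme_point_of_convex_hull_affine_independent[OF assms(1)] by blast
  ultimately show ?thesis
    using assms(2) unfolding circuit_def extended_circuit_def hull_eq by simp
qed

lemma barycentric_support_face:
  assumes ind: "\<not> affine_dependent A"
    and "\<forall>a\<in>A. 0 \<le> l a" "sum l A = 1" "(\<Sum>a\<in>A. l a *\<^sub>R a) = b"
  shows "A \<inter> face_rel b (convex hull A) = {a\<in>A. 0 < l a}"
    and "circuit {a\<in>A. 0 < l a} {b}"
proof -
  have S: "{a\<in>A. 0 < l a} \<subseteq> A" by blast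
  have "b \<in> rel_interior (convex hull {a\<in>A. 0 < l a})"
    using rel_interior_convex_hull_support[OF assms] .
  then show "A \<inter> face_rel b (convex hull A) = {a\<in>A. 0 < l a}"
    and "circuit {a\<in>A. 0 < l a} {b}"
    using face_rel_convex_hull_affine_independent[OF ind S] Int_convex_hull_affine_independent[OF ind S]
      circuit_if_rel_interior_convex_hull[OF affine_independent_subset[OF ind S]] by auto
qed

lemma copositive_circuit_vanishing_at:
  fixes y :: "real^'n"
  assumes "finite S" "\<forall>a\<in>S. 0 \<le> l a" "sum l S = 1" "(\<Sum>a\<in>S. l a *\<^sub>R a) = b"
    and y: "y \<in> pos_orthant" and "0 \<le> d"
  shows "copositive (\<lambda>x. (\<Sum>a\<in>S. l a * (d * mono y b / mono y a * mono x a)) - d * mono x b)"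
  unfolding copositive_def
proof
  fix x :: "real^'n" assume x: "x \<in> pos_orthant"
  define v where "v = log_coords x - log_coords y"
  have shift: "mono x a = mono y a * exp (a \<bullet> v)" for a
    using mono_divide_mono[OF x y, of a] mono_pos[OF y, of a] unfolding v_def
    by (simp add: field_simps)
  have "S \<noteq> {}" using assms(3) by auto
  have "exp (\<Sum>a\<in>S. l a *\<^sub>R (a \<bullet> v)) \<le> (\<Sum>a\<in>S. l a * exp (a \<bullet> v))"
    by (rule convex_on_sum[OF assms(1) \<open>S \<noteq> {}\<close> exp_convex assms(3)]) (use assms(2) in auto)
  moreover have "b \<bullet> v = (\<Sum>a\<in>S. l a *\<^sub>R (a \<bullet> v))"
    unfolding assms(4)[symmetric] by (simp add: inner_sum_left)
  ultimately have jensen: "exp (b \<bullet> v) \<le> (\<Sum>a\<in>S. l a * exp (a \<bullet> v))"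
    by simp
  have "(\<Sum>a\<in>S. l a * (d * mono y b / mono y a * mono x a)) - d * mono x b
      = d * mono y b * ((\<Sum>a\<in>S. l a * exp (a \<bullet> v)) - exp (b \<bullet> v))"
    using mono_pos[OF y]
    by (simp add: shift sum_distrib_left right_diff_distrib mult_ac less_imp_neq[symmetric])
  also have "\<dots> \<ge> 0"
    using jensen mono_pos[OF y, of b] \<open>0 \<le> d\<close> by simp
  finally show "0 \<le> (\<Sum>a\<in>S. l a * (d * mono y b / mono y a * mono x a)) - d * mono x b" .
qed

lemma signomials_single_negative_term:
  assumes "b \<notin> S" "\<forall>a\<in>S. 0 < w a" "0 < d"
    and "\<forall>x\<in>pos_orthant. g x = (\<Sum>a\<in>S. w a * mono x a) - d * mono x b"
  shows "g \<in> signomials S {b}"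
proof -
  define c where "c a = (if a = b then d else w a)" for a
  have "(\<Sum>a\<in>S. c a * mono x a) = (\<Sum>a\<in>S. w a * mono x a)" for x
    using assms(1) by (intro sum.cong) (auto simp: c_def)
  then show ?thesis
    unfolding signomials_def using assms(2-4)
    by (intro CollectI exI[of _ c] conjI) (auto simp: c_def)
qed

lemma singular_point_mass_split:
  fixes f :: "real^'n \<Rightarrow> real"
  assumes "finite Am" and ind: "\<not> affine_dependent Ap"
    and l: "\<And>b. b \<in> Am \<Longrightarrow> sum (l b) Ap = 1 \<and> (\<Sum>a\<in>Ap. l b a *\<^sub>R a) = b"
    and f_eq: "\<forall>x\<in>pos_orthant. f x = (\<Sum>a\<in>Ap. c a * mono x a) - (\<Sum>b\<in>Am. c b * mono x b)"
    and x0: "x0 \<in> Sing_pos f" and "a \<in> Ap"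
  shows "c a * mono x0 a = (\<Sum>b\<in>Am. c b * mono x0 b * l b a)"
proof -
  have "finite Ap" using ind aff_independent_finite by blast
  define m where "m a = c a * mono x0 a" for a
  note balance = Sing_pos_signomial_balance[OF \<open>finite Ap\<close> assms(1) f_eq x0, folded m_def]
  have "m a = (\<Sum>b\<in>Am. m b * l b a)"
  proof (rule affine_independent_coefficients_unique[OF ind _ _ \<open>a \<in> Ap\<close>])
    have "(\<Sum>a\<in>Ap. \<Sum>b\<in>Am. m b * l b a) = (\<Sum>b\<in>Am. m b * sum (l b) Ap)"
      by (simp add: sum_distrib_left) (rule sum.swap)
    also have "\<dots> = sum m Ap"
      using l balance(1) by simp
    finally show "sum m Ap = (\<Sum>a\<in>Ap. \<Sum>b\<in>Am. m b * l b a)" ..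
    have "(\<Sum>a\<in>Ap. (\<Sum>b\<in>Am. m b * l b a) *\<^sub>R a)
        = (\<Sum>b\<in>Am. m b *\<^sub>R (\<Sum>a\<in>Ap. l b a *\<^sub>R a))"
      by (simp add: scaleR_sum_left scaleR_sum_right sum.swap[of _ Ap])
    also have "\<dots> = (\<Sum>a\<in>Ap. m a *\<^sub>R a)"
      using l balance(2) by simp
    finally show "(\<Sum>a\<in>Ap. m a *\<^sub>R a) = (\<Sum>a\<in>Ap. (\<Sum>b\<in>Am. m b * l b a) *\<^sub>R a)" ..
  qed
  then show ?thesis by (simp add: m_def)
qed

lemma sum_split_signomial_pieces:
  assumes "finite Ap" "\<forall>b\<in>Am. \<forall>a\<in>Ap. 0 \<le> l b a" and y: "y \<in> pos_orthant"
    and split: "\<And>a. a \<in> Ap \<Longrightarrow> c a * mono y a = (\<Sum>b\<in>Am. c b * mono y b * l b a)"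
  shows "(\<Sum>b\<in>Am. (\<Sum>a\<in>{a\<in>Ap. 0 < l b a}. l b a * (c b * mono y b / mono y a * mono x a))
                  - c b * mono x b)
       = (\<Sum>a\<in>Ap. c a * mono x a) - (\<Sum>b\<in>Am. c b * mono x b)"
proof -
  have "(\<Sum>a\<in>{a\<in>Ap. 0 < l b a}. l b a * (c b * mono y b / mono y a * mono x a))
      = (\<Sum>a\<in>Ap. l b a * (c b * mono y b / mono y a * mono x a))" if "b \<in> Am" for b
    using sum_positive_support[OF assms(1), of "l b" "\<lambda>a. c b * mono y b / mono y a * mono x a"]
      assms(2) that by simp
  then have "(\<Sum>b\<in>Am. (\<Sum>a\<in>{a\<in>Ap. 0 < l b a}. l b a * (c b * mono y b / mono y a * mono x a))
                  - c b * mono x b)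
      = (\<Sum>b\<in>Am. \<Sum>a\<in>Ap. l b a * (c b * mono y b / mono y a * mono x a))
        - (\<Sum>b\<in>Am. c b * mono x b)"
    by (simp add: sum_subtractf)
  also have "(\<Sum>b\<in>Am. \<Sum>a\<in>Ap. l b a * (c b * mono y b / mono y a * mono x a))
      = (\<Sum>a\<in>Ap. (\<Sum>b\<in>Am. c b * mono y b * l b a) / mono y a * mono x a)"
    by (subst sum.swap) (simp add: sum_divide_distrib sum_distrib_left mult_ac)
  also have "\<dots> = (\<Sum>a\<in>Ap. c a * mono y a / mono y a * mono x a)"
    by (intro sum.cong refl) (simp add: split)
  also have "\<dots> = (\<Sum>a\<in>Ap. c a * mono x a)"
    using mono_pos[OF y] by (simp add: less_imp_neq[symmetric])
  finally show ?thesis .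
qed

lemma signomial_decomposition_at_singular_point:
  fixes f :: "real^'n \<Rightarrow> real"
  assumes "finite Am" "Ap \<inter> Am = {}" and ind: "\<not> affine_dependent Ap"
    and l: "\<And>b. b \<in> Am \<Longrightarrow>
      (\<forall>a\<in>Ap. 0 \<le> l b a) \<and> sum (l b) Ap = 1 \<and> (\<Sum>a\<in>Ap. l b a *\<^sub>R a) = b"
    and f: "f \<in> signomials Ap Am" and x0: "x0 \<in> Sing_pos f"
  shows "\<exists>q. (\<forall>b\<in>Am. copositive (q b) \<and> q b \<in> signomials {a\<in>Ap. 0 < l b a} {b})
           \<and> (\<forall>x\<in>pos_orthant. f x = (\<Sum>b\<in>Am. q b x))"
proof -
  have "finite Ap" using ind aff_independent_finite by blast
  obtain c where c: "\<forall>a\<in>Ap \<union> Am. 0 < c a"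
    and f_eq: "\<forall>x\<in>pos_orthant. f x = (\<Sum>a\<in>Ap. c a * mono x a) - (\<Sum>b\<in>Am. c b * mono x b)"
    using f unfolding signomials_def by blast
  have x0p: "x0 \<in> pos_orthant" using x0 by (simp add: Sing_pos_def)
  have split: "c a * mono x0 a = (\<Sum>b\<in>Am. c b * mono x0 b * l b a)" if "a \<in> Ap" for a
    using singular_point_mass_split[OF assms(1) ind _ f_eq x0 that] l by blast
  define S where "S b = {a\<in>Ap. 0 < l b a}" for b
  define q where "q b x = (\<Sum>a\<in>S b. l b a * (c b * mono x0 b / mono x0 a * mono x a))
                          - c b * mono x b" for b x
  have "copositive (q b)" if "b \<in> Am" for b
    unfolding q_def
  proof (rule copositive_circuit_vanishing_at[OF _ _ _ _ x0p])
    show "finite (S b)" "\<forall>a\<in>S b. 0 \<le> l b a"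
      using \<open>finite Ap\<close> by (auto simp: S_def)
    show "sum (l b) (S b) = 1" "(\<Sum>a\<in>S b. l b a *\<^sub>R a) = b"
      using sum_positive_support[OF \<open>finite Ap\<close>, of "l b" "\<lambda>_. 1::real"]
        sum_positive_support[OF \<open>finite Ap\<close>, of "l b" "\<lambda>a. a"] l[OF that]
      by (simp_all add: S_def)
    show "0 \<le> c b" using c that by (simp add: less_imp_le)
  qed
  moreover have "q b \<in> signomials (S b) {b}" if "b \<in> Am" for b
  proof (rule signomials_single_negative_term)
    show "b \<notin> S b" using assms(2) that by (auto simp: S_def)
    show "\<forall>a\<in>S b. 0 < l b a * (c b * mono x0 b / mono x0 a)"
      using c that mono_pos[OF x0p] by (auto simp: S_def)
    show "0 < c b" using c that by auto
    show "\<forall>x\<in>pos_orthant. q b x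
        = (\<Sum>a\<in>S b. l b a * (c b * mono x0 b / mono x0 a) * mono x a) - c b * mono x b"
      by (simp add: q_def mult.assoc)
  qed
  moreover have "f x = (\<Sum>b\<in>Am. q b x)" if "x \<in> pos_orthant" for x
  proof -
    have "\<forall>b\<in>Am. \<forall>a\<in>Ap. 0 \<le> l b a" using l by blast
    from sum_split_signomial_pieces[OF \<open>finite Ap\<close> this x0p split] show ?thesis
      using f_eq that by (simp add: q_def S_def)
  qed
  ultimately show ?thesis
    unfolding S_def by blast
qed

lemma SONC_sum_copositive_circuit_signomials:
  assumes "finite B" "\<forall>b\<in>B. circuit_signomial (q b) \<and> copositive (q b)"
    and "\<forall>x\<in>pos_orthant. f x = (\<Sum>b\<in>B. q b x)"
  shows "SONC f"
proof -
  obtain h where h: "bij_betw h {0..<card B} B"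
    using ex_bij_betw_nat_finite[OF assms(1)] by blast
  then have "\<forall>i\<in>{0..<card B}. circuit_signomial (q (h i)) \<and> copositive (q (h i))"
    using assms(2) bij_betwE by blast
  moreover have "\<forall>x\<in>pos_orthant. f x = (\<Sum>i\<in>{0..<card B}. q (h i) x)"
    using assms(3) sum.reindex_bij_betw[OF h, of "\<lambda>b. q b _"] by simp
  ultimately show ?thesis
    unfolding SONC_def by (intro exI[of _ "{0..<card B}"] exI[of _ "\<lambda>i. q (h i)"]) simp
qed

theorem proposition3p10:
  fixes Ap Am :: "(real^'n) set" and f :: "real^'n \<Rightarrow> real"
  assumes "finite Ap" and "finite Am" and "Ap \<inter> Am = {}"
    and "extended_circuit Ap Am" and "Am \<noteq> {}"
    and "f \<in> signomials Ap Am"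
    and "Sing_pos f \<noteq> {}"
  shows "(\<exists>q. (\<forall>b\<in>Am. copositive (q b) \<and> circuit (Ap \<inter> face_rel b (convex hull Ap)) {b}
                      \<and> q b \<in> signomials (Ap \<inter> face_rel b (convex hull Ap)) {b})
             \<and> (\<forall>x\<in>pos_orthant. f x = (\<Sum>b\<in>Am. q b x)))
         \<and> SONC f"
proof -
  have ind: "\<not> affine_dependent Ap" and "Am \<subseteq> convex hull Ap"
    using extended_circuit_affine_independent[OF assms(3,5,4)] by auto
  then have "\<forall>b\<in>Am. \<exists>u. (\<forall>a\<in>Ap. 0 \<le> u a) \<and> sum u Ap = 1 \<and> (\<Sum>a\<in>Ap. u a *\<^sub>R a) = b"
    using convex_hull_finite[OF assms(1)] by blast
  then obtain l where l: "\<And>b. b \<in> Am \<Longrightarrow>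
      (\<forall>a\<in>Ap. 0 \<le> l b a) \<and> sum (l b) Ap = 1 \<and> (\<Sum>a\<in>Ap. l b a *\<^sub>R a) = b"
    by metis
  note face = barycentric_support_face[OF ind, of "l b" b for b]
  obtain x0 where "x0 \<in> Sing_pos f" using assms(7) by blast
  from signomial_decomposition_at_singular_point[OF assms(2,3) ind l assms(6) this]
  obtain q where q: "\<forall>b\<in>Am. copositive (q b) \<and> q b \<in> signomials {a\<in>Ap. 0 < l b a} {b}"
    and f_eq: "\<forall>x\<in>pos_orthant. f x = (\<Sum>b\<in>Am. q b x)"
    by blast
  have "circuit_signomial (q b)" if "b \<in> Am" for b
    unfolding circuit_signomial_def using assms(1,3) that q face(2)[OF l[OF that, THEN conjunct1]] l
    by (intro exI[of _ "{a\<in>Ap. 0 < l b a}"] exI[of _ "{b}"]) auto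
  then have "SONC f"
    using SONC_sum_copositive_circuit_signomials[OF assms(2) _ f_eq] q by blast
  with q f_eq face l show ?thesis
    by auto
qed

end
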